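(* For all integers $s\geq 1$ and $n\geq 2$, \begin{align*} a_{8s3^{n}} &\equiv 3^{n+3}\cdot 2s+3^{n+2}\cdot 2s \pmod{3^{n+4}},\\ a_{8s3^{n}+1} &\equiv 3^{n+2}\cdot 5s+3^{n+1}\cdot s+1 \pmod{3^{n+4}},\\ a_{8s3^{n}+2} &\equiv 3^{n+3}\cdot 2s+3^{n+2}\cdot 5s+1 \pmod{3^{n+4}}. \end{align*}
   Context: The Narayana sequence $(a_n)_{n\geq 0}$ is defined by $a_0=0$, $a_1=a_2=1$ and $a_n=a_{n-1}+a_{n-3}$ for all $n\geq 3$. *)

theory Defs
  imports Main "HOL-Number_Theory.Cong"
begin

fun narayana :: "nat \<Rightarrow> int" where
  "narayana 0 = 0"
| "narayana (Suc 0) = 1"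
| "narayana (Suc (Suc 0)) = 1"
| "narayana (Suc (Suc (Suc n))) = narayana (Suc (Suc n)) + narayana n"

end

theory Submission
  imports Defs
begin

(* Let \<alpha> be a root of x^3 = x^2 + 1 and L the Z-linear form on Z[\<alpha>] with L(\<alpha>^k) = a_k.
   Representing y \<in> Z[\<alpha>] by the triple (L y, L(\<alpha> y), L(\<alpha>^2 y)) turns Z^3 into a commutative
   ring in which \<alpha>^k is (a_k, a_(k+1), a_(k+2)) and divisibility by an integer is componentwise.
   A direct computation gives \<alpha>^72 = 1 + 3^3 C (mod 3^6) with C = (24, 16, 33); since
   (1 + 3^a C + 3^(a+3) D)^3 = 1 + 3^(a+1) C (mod 3^(a+4)) for a \<ge> 3, induction on n yields
   \<alpha>^(8*3^n) = 1 + 3^(n+1) C (mod 3^(n+4)), and because 2(n+1) \<ge> n+4 the s-th power is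
   1 + s 3^(n+1) C modulo the same power of 3. Reading off the three coordinates gives the theorem. *)

lemma power_near_one_dvd:
  fixes u X C :: "'a::comm_ring_1"
  assumes "b \<le> 2 * a" and "u ^ b dvd X - (1 + u ^ a * C)"
  shows "u ^ b dvd X ^ s - (1 + of_nat s * u ^ a * C)"
proof (induction s)
  case 0
  show ?case by simp
next
  case (Suc s)
  obtain D where D: "X - (1 + u ^ a * C) = u ^ b * D"
    using assms(2) by (rule dvdE)
  obtain E where "X ^ s - (1 + of_nat s * u ^ a * C) = u ^ b * E"
    using Suc.IH by (rule dvdE)
  then have "X ^ Suc s = (1 + of_nat s * u ^ a * C + u ^ b * E) * X"
    by (simp add: power_Suc2 algebra_simps)
  also have "\<dots> = (1 + of_nat s * u ^ a * C + u ^ b * E) * (1 + u ^ a * C + u ^ b * D)"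
    using D by (simp add: algebra_simps)
  finally have expand: "X ^ Suc s - (1 + of_nat (Suc s) * u ^ a * C)
      = u ^ b * (D + E * (1 + u ^ a * C + u ^ b * D) + of_nat s * u ^ a * C * D)
        + of_nat s * C\<^sup>2 * (u ^ a)\<^sup>2"
    by (simp add: algebra_simps power2_eq_square)
  have "u ^ b dvd (u ^ a)\<^sup>2"
    using assms(1) by (metis le_imp_power_dvd power_mult mult.commute)
  then show ?case
    unfolding expand by (simp add: dvd_add)
qed

lemma cube_near_one_dvd:
  fixes X C :: "'a::comm_ring_1"
  assumes "a < b" and "b \<le> 2 * a" and "3 ^ b dvd X - (1 + 3 ^ a * C)"
  shows "3 ^ (b + 1) dvd X ^ 3 - (1 + 3 ^ (a + 1) * C)"
proof -
  define p q :: 'a where "p = 3 ^ a" and "q = 3 ^ (b - a)"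
  have pq: "3 ^ b = p * q"
    using assms(1) by (simp add: p_def q_def flip: power_add)
  obtain D where "X - (1 + p * C) = p * q * D"
    using assms(3) unfolding pq p_def[symmetric] by (rule dvdE)
  then have "X = 1 + p * (C + q * D)"
    by (simp add: algebra_simps)
  moreover have "3 ^ (a + 1) = 3 * p"
    by (simp add: p_def)
  ultimately have expand: "X ^ 3 - (1 + 3 ^ (a + 1) * C)
      = 3 * p * q * D + 3 * p\<^sup>2 * (C + q * D)\<^sup>2 + p ^ 3 * (C + q * D) ^ 3"
    by (simp add: algebra_simps power2_eq_square power3_eq_cube)
  have "3 ^ (b + 1) dvd 3 * p\<^sup>2" and "3 ^ (b + 1) dvd p ^ 3"
    using assms(1,2) by (simp_all add: p_def le_imp_power_dvd flip: power_mult power_Suc)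
  moreover have "3 ^ (b + 1) dvd 3 * p * q * D"
    using dvd_triv_left[of "3 ^ (b + 1)" D] by (simp add: pq mult.assoc)
  ultimately show ?thesis
    unfolding expand by (simp add: dvd_add dvd_mult2)
qed

codatatype nar_int = Nar (nar0: int) (nar1: int) (nar2: int)

lemma nar_int_eq_iff:
  "x = y \<longleftrightarrow> nar0 x = nar0 y \<and> nar1 x = nar1 y \<and> nar2 x = nar2 y"
  by (auto intro: nar_int.expand)

instantiation nar_int :: comm_ring_1
begin

primcorec zero_nar_int :: nar_int where
  "nar0 0 = 0" | "nar1 0 = 0" | "nar2 0 = 0"

primcorec one_nar_int :: nar_int where
  "nar0 1 = 0" | "nar1 1 = 1" | "nar2 1 = 1"

primcorec plus_nar_int :: "nar_int \<Rightarrow> nar_int \<Rightarrow> nar_int" where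
  "nar0 (x + y) = nar0 x + nar0 y"
| "nar1 (x + y) = nar1 x + nar1 y"
| "nar2 (x + y) = nar2 x + nar2 y"

primcorec uminus_nar_int :: "nar_int \<Rightarrow> nar_int" where
  "nar0 (- x) = - nar0 x" | "nar1 (- x) = - nar1 x" | "nar2 (- x) = - nar2 x"

primcorec minus_nar_int :: "nar_int \<Rightarrow> nar_int \<Rightarrow> nar_int" where
  "nar0 (x - y) = nar0 x - nar0 y"
| "nar1 (x - y) = nar1 x - nar1 y"
| "nar2 (x - y) = nar2 x - nar2 y"

primcorec times_nar_int :: "nar_int \<Rightarrow> nar_int \<Rightarrow> nar_int" where
  "nar0 (x * y) = nar0 x * (nar1 y - nar0 y) + nar1 x * (nar0 y + nar1 y - nar2 y)
     + nar2 x * (nar2 y - nar1 y)"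
| "nar1 (x * y) = nar0 x * (nar2 y - nar1 y) + nar1 x * (nar1 y - nar0 y) + nar2 x * nar0 y"
| "nar2 (x * y) = nar0 x * nar0 y + nar1 x * (nar2 y - nar1 y) + nar2 x * nar1 y"

instance
  by standard (simp_all add: nar_int_eq_iff algebra_simps)

end

lemma of_nat_nar_int: "of_nat n = Nar 0 (int n) (int n)"
  by (induction n) (simp_all add: nar_int_eq_iff)

lemma of_int_nar_int: "of_int k = Nar 0 k k"
  by (simp add: nar_int_eq_iff of_int_of_nat of_nat_nar_int)

lemma numeral_nar_int: "numeral m = Nar 0 (numeral m) (numeral m)"
  using of_int_nar_int[of "numeral m"] by simp

lemma nar_int_conversion_simps [simp]:
  "nar0 (numeral m) = 0" "nar1 (numeral m) = numeral m" "nar2 (numeral m) = numeral m"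
  "nar0 (of_int k) = 0" "nar1 (of_int k) = k" "nar2 (of_int k) = k"
  by (simp_all add: numeral_nar_int of_int_nar_int)

lemma of_int_mult_nar_int: "of_int k * x = Nar (k * nar0 x) (k * nar1 x) (k * nar2 x)"
  by (simp add: nar_int_eq_iff of_int_nar_int algebra_simps)

lemma of_int_dvd_nar_int_iff:
  "of_int k dvd x \<longleftrightarrow> k dvd nar0 x \<and> k dvd nar1 x \<and> k dvd nar2 x"
proof
  assume "of_int k dvd x"
  then obtain y where "x = of_int k * y" by blast
  then show "k dvd nar0 x \<and> k dvd nar1 x \<and> k dvd nar2 x"
    by (simp add: of_int_mult_nar_int)
next
  assume "k dvd nar0 x \<and> k dvd nar1 x \<and> k dvd nar2 x"
  then obtain y0 y1 y2 where "nar0 x = k * y0" "nar1 x = k * y1" "nar2 x = k * y2"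
    by (auto elim!: dvdE)
  then have "x = of_int k * Nar y0 y1 y2"
    by (simp add: nar_int_eq_iff of_int_mult_nar_int)
  then show "of_int k dvd x" by simp
qed

definition nar_root :: nar_int where
  "nar_root = Nar 1 1 1"

lemma nar_root_power: "nar_root ^ k = Nar (narayana k) (narayana (k + 1)) (narayana (k + 2))"
  by (induction k) (simp_all add: nar_int_eq_iff nar_root_def)

lemma nar_root_power_72:
  "nar_root ^ 72 = Nar 374009739309 548137914373 803335158406"
  by code_simp

lemma nar_root_power_8_mult_power_3:
  assumes "n \<ge> 2"
  shows "3 ^ (n + 4) dvd nar_root ^ (8 * 3 ^ n) - (1 + 3 ^ (n + 1) * Nar 24 16 33)"
  using assms
proof (induction n rule: dec_induct)
  case base
  show ?case
    using of_int_dvd_nar_int_iff[of 729] by (simp add: nar_root_power_72)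
next
  case (step n)
  have "nar_root ^ (8 * 3 ^ Suc n) = (nar_root ^ (8 * 3 ^ n)) ^ 3"
    by (simp add: mult.assoc flip: power_mult power_Suc2)
  moreover have "3 ^ (n + 4 + 1) dvd
      (nar_root ^ (8 * 3 ^ n)) ^ 3 - (1 + 3 ^ (n + 1 + 1) * Nar 24 16 33)"
    using step by (intro cube_near_one_dvd) simp_all
  ultimately show ?case
    by simp
qed

theorem proposition3p4:
  fixes s n :: nat
  assumes "s \<ge> 1" and "n \<ge> 2"
  shows "[narayana (8 * s * 3 ^ n) = 3 ^ (n + 3) * 2 * int s + 3 ^ (n + 2) * 2 * int s] (mod 3 ^ (n + 4)) \<and>
         [narayana (8 * s * 3 ^ n + 1) = 3 ^ (n + 2) * 5 * int s + 3 ^ (n + 1) * int s + 1] (mod 3 ^ (n + 4)) \<and>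
         [narayana (8 * s * 3 ^ n + 2) = 3 ^ (n + 3) * 2 * int s + 3 ^ (n + 2) * 5 * int s + 1] (mod 3 ^ (n + 4))"
proof -
  define r :: int where "r = int s * 3 ^ (n + 1)"
  have "3 ^ (n + 4) dvd (nar_root ^ (8 * 3 ^ n)) ^ s - (1 + of_nat s * 3 ^ (n + 1) * Nar 24 16 33)"
    using assms(2) by (intro power_near_one_dvd nar_root_power_8_mult_power_3) simp_all
  then have "of_int (3 ^ (n + 4)) dvd nar_root ^ (8 * s * 3 ^ n) - (1 + of_int r * Nar 24 16 33)"
    by (simp add: r_def ac_simps flip: power_mult)
  then have dvd: "3 ^ (n + 4) dvd narayana (8 * s * 3 ^ n) - 24 * r"
    "3 ^ (n + 4) dvd narayana (8 * s * 3 ^ n + 1) - (1 + 16 * r)"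
    "3 ^ (n + 4) dvd narayana (8 * s * 3 ^ n + 2) - (1 + 33 * r)"
    unfolding of_int_dvd_nar_int_iff nar_root_power by (simp_all add: algebra_simps)
  have r: "3 ^ (n + 3) * 2 * int s + 3 ^ (n + 2) * 2 * int s = 24 * r"
    "3 ^ (n + 2) * 5 * int s + 3 ^ (n + 1) * int s + 1 = 1 + 16 * r"
    "3 ^ (n + 3) * 2 * int s + 3 ^ (n + 2) * 5 * int s + 1 = 1 + 33 * r"
    by (simp_all add: r_def power_add)
  show ?thesis
    unfolding cong_iff_dvd_diff r using dvd by blast
qed

end
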